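(* Let $\psi_1,\psi_2$ be real random fields on $\mathbb{R}^2$ and $k_R>0$, and let $E(k)$, $G_1(k)$, $G_2(k)$, $P(k)$, $\Gamma(k)$ be as defined in the context. Then for every wavenumber $k\in(0,+\infty)$ with $E(k)>0$, \[ |2\Gamma(k)-1| \le \frac{k^2+[1-P(k)]\,k_R^2}{k^2+k_R^2\,P(k)}. \]
   Context: Two-layer quasi-geostrophic setting. $\psi_1,\psi_2$ are the (random) streamfunctions of the upper and lower layer, real fields on $\mathbb{R}^2$ with Fourier transforms $\hat\psi_\alpha$, so that $\psi_\alpha(\mathbf{x})=\int_{\mathbb{R}^2}\hat\psi_\alpha(\mathbf{k})e^{i\mathbf{k}\cdot\mathbf{x}}\,d\mathbf{k}$; $\langle\cdot\rangle$ denotes ensemble average. For fields $a,b$ and $k>0$ define the bracket \[ \langle a,b\rangle_k=\frac12\int_{A\in SO(2)} d\Omega(A)\; k\,\big\langle \hat a(kA\mathbf{e})\overline{\hat b(kA\mathbf{e})}+\overline{\hat a(kA\mathbf{e})}\hat b(kA\mathbf{e})\big\rangle, \] where $\mathbf{e}$ is a fixed unit vector and $d\Omega$ is the rotation-invariant measure on $SO(2)$; it is symmetric, bilinear, satisfies $\langle a,a\rangle_k\ge 0$ and $\langle \Delta a,b\rangle_k=\langle a,\Delta b\rangle_k=-k^2\langle a,b\rangle_k$. The potential vorticities are $q_1=\Delta\psi_1+\frac{k_R^2}{2}(\psi_2-\psi_1)$ and $q_2=\Delta\psi_2-\frac{k_R^2}{2}(\psi_2-\psi_1)$, with $k_R>0$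 the Rossby wavenumber (a constant Coriolis parameter does not contribute at $k>0$ and is omitted). Let $\psi=(\psi_1+\psi_2)/2$, $\tau=(\psi_1-\psi_2)/2$. Define the energy spectrum $E(k)=-\langle\psi_1,q_1\rangle_k-\langle\psi_2,q_2\rangle_k$, which equals $E_K(k)+E_P(k)$ with barotropic spectrum $E_K(k)=2k^2\langle\psi,\psi\rangle_k$ and baroclinic spectrum $E_P(k)=2(k^2+k_R^2)\langle\tau,\tau\rangle_k$. Define potential enstrophy spectra $G_\alpha(k)=\langle q_\alpha,q_\alpha\rangle_k$ and $G(k)=G_1(k)+G_2(k)$ (when $E(k)>0$ one has $G(k)>0$). For $k$ with $E(k)>0$ define $P(k)=E_P(k)/E(k)\in[0,1]$ (so $E_K=(1-P)E$) and $\Gamma(k)=G_1(k)/G(k)\in[0,1]$ (so $G_2=(1-\Gamma)G$). *)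

theory Defs
  imports "HOL-Probability.Probability"
begin

text \<open>A (random) field is represented by its Fourier transform: for each sample
  point \<omega> of the probability space and each wavevector \<kappa> in R^2 (modelled as
  real \<times> real) the complex amplitude.\<close>

type_synonym 'w field = "'w \<Rightarrow> real \<times> real \<Rightarrow> complex"

definition lap :: "'w field \<Rightarrow> 'w field" where
  "lap a = (\<lambda>\<omega> \<kappa>. - complex_of_real ((norm \<kappa>)\<^sup>2) * a \<omega> \<kappa>)"

text \<open>Wavevector k A e with e = (1,0) and A the rotation by angle \<theta>.\<close>
definition wv :: "real \<Rightarrow> real \<Rightarrow> real \<times> real" where
  "wv k \<theta> = (k * cos \<theta>, k * sin \<theta>)"

text \<open>The bracket: (1/2) \<integral>_{SO(2)} d\<Omega>(A) k < a(kAe) conj(b(kAe)) + conj(a(kAe)) b(kAe) >,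
  with SO(2) parametrised by \<theta> \<in> [0, 2\<pi>] and d\<Omega> = d\<theta> (the normalisation of the
  invariant measure is irrelevant for the statement).  The integrand
  a conj b + conj a b is real; we write it as the real part of itself.\<close>
definition bracket :: "'w measure \<Rightarrow> 'w field \<Rightarrow> 'w field \<Rightarrow> real \<Rightarrow> real" where
  "bracket M a b k = 1/2 * (LBINT \<theta>=0..2*pi. k * (LINT \<omega>|M.
      Re (a \<omega> (wv k \<theta>) * cnj (b \<omega> (wv k \<theta>)) + cnj (a \<omega> (wv k \<theta>)) * b \<omega> (wv k \<theta>))))"

definition q1 :: "real \<Rightarrow> 'w field \<Rightarrow> 'w field \<Rightarrow> 'w field" where
  "q1 kR psi1 psi2 = (\<lambda>\<omega> \<kappa>. lap psi1 \<omega> \<kappa> + complex_of_real (kR\<^sup>2 / 2) * (psi2 \<omega> \<kappa> - psi1 \<omega> \<kappa>))"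

definition q2 :: "real \<Rightarrow> 'w field \<Rightarrow> 'w field \<Rightarrow> 'w field" where
  "q2 kR psi1 psi2 = (\<lambda>\<omega> \<kappa>. lap psi2 \<omega> \<kappa> - complex_of_real (kR\<^sup>2 / 2) * (psi2 \<omega> \<kappa> - psi1 \<omega> \<kappa>))"

definition tau :: "'w field \<Rightarrow> 'w field \<Rightarrow> 'w field" where
  "tau psi1 psi2 = (\<lambda>\<omega> \<kappa>. (psi1 \<omega> \<kappa> - psi2 \<omega> \<kappa>) / 2)"

definition Espec :: "'w measure \<Rightarrow> real \<Rightarrow> 'w field \<Rightarrow> 'w field \<Rightarrow> real \<Rightarrow> real" where
  "Espec M kR psi1 psi2 k =
     - bracket M psi1 (q1 kR psi1 psi2) k - bracket M psi2 (q2 kR psi1 psi2) k"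

definition EPspec :: "'w measure \<Rightarrow> real \<Rightarrow> 'w field \<Rightarrow> 'w field \<Rightarrow> real \<Rightarrow> real" where
  "EPspec M kR psi1 psi2 k = 2 * (k\<^sup>2 + kR\<^sup>2) * bracket M (tau psi1 psi2) (tau psi1 psi2) k"

definition G1spec :: "'w measure \<Rightarrow> real \<Rightarrow> 'w field \<Rightarrow> 'w field \<Rightarrow> real \<Rightarrow> real" where
  "G1spec M kR psi1 psi2 k = bracket M (q1 kR psi1 psi2) (q1 kR psi1 psi2) k"

definition G2spec :: "'w measure \<Rightarrow> real \<Rightarrow> 'w field \<Rightarrow> 'w field \<Rightarrow> real \<Rightarrow> real" where
  "G2spec M kR psi1 psi2 k = bracket M (q2 kR psi1 psi2) (q2 kR psi1 psi2) k"

definition Gspec :: "'w measure \<Rightarrow> real \<Rightarrow> 'w field \<Rightarrow> 'w field \<Rightarrow> real \<Rightarrow> real" where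
  "Gspec M kR psi1 psi2 k = G1spec M kR psi1 psi2 k + G2spec M kR psi1 psi2 k"

definition Pratio :: "'w measure \<Rightarrow> real \<Rightarrow> 'w field \<Rightarrow> 'w field \<Rightarrow> real \<Rightarrow> real" where
  "Pratio M kR psi1 psi2 k = EPspec M kR psi1 psi2 k / Espec M kR psi1 psi2 k"

definition Gammaratio :: "'w measure \<Rightarrow> real \<Rightarrow> 'w field \<Rightarrow> 'w field \<Rightarrow> real \<Rightarrow> real" where
  "Gammaratio M kR psi1 psi2 k = G1spec M kR psi1 psi2 k / Gspec M kR psi1 psi2 k"

end

theory Submission
  imports Defs
begin

text \<open>On the shell \<open>|\<kappa>| = k\<close> the Laplacian is multiplication by \<open>-k\<^sup>2\<close>, so in the
  barotropic/baroclinic basis \<open>\<psi> = (\<psi>\<^sub>1 + \<psi>\<^sub>2)/2\<close>, \<open>\<tau> = (\<psi>\<^sub>1 - \<psi>\<^sub>2)/2\<close> the potential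
  vorticities are \<open>q\<^sub>1\<^sub>,\<^sub>2 = -k\<^sup>2\<psi> \<mp> m\<tau>\<close> with \<open>m = k\<^sup>2 + k\<^sub>R\<^sup>2\<close>.  The bracket being
  bilinear, all spectra are quadratic forms in \<open>A = \<langle>\<psi>,\<psi>\<rangle>\<close>, \<open>B = \<langle>\<tau>,\<tau>\<rangle>\<close>,
  \<open>C = \<langle>\<psi>,\<tau>\<rangle>\<close>: \<open>E = 2k\<^sup>2A + 2mB\<close>, \<open>E\<^sub>P = 2mB\<close> and \<open>G\<^sub>1\<^sub>,\<^sub>2 = k\<^sup>4A \<plusminus> 2k\<^sup>2mC + m\<^sup>2B\<close>.
  Hence \<open>2\<Gamma> - 1 = 2k\<^sup>2mC / (k\<^sup>4A + m\<^sup>2B)\<close>, while the right-hand side equals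
  \<open>k\<^sup>2m(A + B) / (k\<^sup>4A + m\<^sup>2B)\<close>; and \<open>|2C| \<le> A + B\<close> because
  \<open>\<langle>\<psi>\<^sub>1,\<psi>\<^sub>1\<rangle> = A + B + 2C\<close> and \<open>\<langle>\<psi>\<^sub>2,\<psi>\<^sub>2\<rangle> = A + B - 2C\<close> are nonnegative.\<close>

lemma norm_wv_squared: "(norm (wv k \<theta>))\<^sup>2 = k\<^sup>2"
  by (simp add: wv_def norm_prod_def power_mult_distrib flip: distrib_left)

definition barotropic :: "'w field \<Rightarrow> 'w field \<Rightarrow> 'w field" where
  "barotropic psi1 psi2 = (\<lambda>\<omega> \<kappa>. (psi1 \<omega> \<kappa> + psi2 \<omega> \<kappa>) / 2)"

lemma q1_wv_modes:
  "q1 kR psi1 psi2 \<omega> (wv k \<theta>) = of_real (- k\<^sup>2) * barotropic psi1 psi2 \<omega> (wv k \<theta>)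
     + of_real (- (k\<^sup>2 + kR\<^sup>2)) * tau psi1 psi2 \<omega> (wv k \<theta>)"
  unfolding q1_def lap_def norm_wv_squared barotropic_def tau_def by (simp add: field_simps)

lemma q2_wv_modes:
  "q2 kR psi1 psi2 \<omega> (wv k \<theta>) = of_real (- k\<^sup>2) * barotropic psi1 psi2 \<omega> (wv k \<theta>)
     + of_real (k\<^sup>2 + kR\<^sup>2) * tau psi1 psi2 \<omega> (wv k \<theta>)"
  unfolding q2_def lap_def norm_wv_squared barotropic_def tau_def by (simp add: field_simps)

lemma psi1_modes: "psi1 \<omega> \<kappa> = of_real 1 * barotropic psi1 psi2 \<omega> \<kappa> + of_real 1 * tau psi1 psi2 \<omega> \<kappa>"
  by (simp add: barotropic_def tau_def field_simps)

lemma psi2_modes: "psi2 \<omega> \<kappa> = of_real 1 * barotropic psi1 psi2 \<omega> \<kappa> + of_real (- 1) * tau psi1 psi2 \<omega> \<kappa>"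
  by (simp add: barotropic_def tau_def field_simps)

lemma Re_symmetrised_product_real_combinations:
  fixes u v :: complex and a1 a2 b1 b2 :: real
  shows "Re ((of_real a1 * u + of_real a2 * v) * cnj (of_real b1 * u + of_real b2 * v)
       + cnj (of_real a1 * u + of_real a2 * v) * (of_real b1 * u + of_real b2 * v))
    = 2 * (a1 * b1 * (cmod u)\<^sup>2 + a2 * b2 * (cmod v)\<^sup>2 + (a1 * b2 + a2 * b1) * Re (u * cnj v))"
  by (cases u; cases v) (simp add: cmod_def power2_eq_square algebra_simps)

lemma bracket_self_nonneg: "k \<ge> 0 \<Longrightarrow> bracket M a a k \<ge> 0"
  unfolding bracket_def interval_lebesgue_integral_def set_lebesgue_integral_def
  by (auto simp: zero_ereal_def intro!: integral_nonneg mult_nonneg_nonneg)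

lemma borel_measurable_cnj [measurable (raw)]:
  "f \<in> borel_measurable M \<Longrightarrow> (\<lambda>x. cnj (f x)) \<in> borel_measurable M"
  by (rule borel_measurable_continuous_on[OF continuous_on_cnj[OF continuous_on_id]])

lemma enstrophy_asymmetry_bound:
  fixes k kR A B C E P G1 G2 :: real
  defines "m \<equiv> k\<^sup>2 + kR\<^sup>2"
  assumes A: "A \<ge> 0" and B: "B \<ge> 0" and C: "\<bar>2 * C\<bar> \<le> A + B"
    and E: "E = 2 * k\<^sup>2 * A + 2 * m * B" and E_pos: "E > 0"
    and P: "P = 2 * m * B / E"
    and G1: "G1 = k^4 * A + 2 * k\<^sup>2 * m * C + m\<^sup>2 * B"
    and G2: "G2 = k^4 * A - 2 * k\<^sup>2 * m * C + m\<^sup>2 * B"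
  shows "\<bar>2 * (G1 / (G1 + G2)) - 1\<bar> \<le> (k\<^sup>2 + (1 - P) * kR\<^sup>2) / (k\<^sup>2 + kR\<^sup>2 * P)"
proof -
  define S where "S = k\<^sup>2 * A + m * B"
  define D where "D = k^4 * A + m\<^sup>2 * B"
  have "m \<ge> 0"
    unfolding m_def by simp
  have "E = 2 * S"
    unfolding E S_def by simp
  with E_pos P have S_pos: "S > 0" and P_eq: "P = m * B / S"
    by simp_all
  then have "k\<^sup>2 * A > 0 \<or> m * B > 0"
    unfolding S_def by linarith
  then have D_pos: "D > 0"
  proof
    assume kA: "k\<^sup>2 * A > 0"
    then have "k\<^sup>2 > 0"
      using A by (simp add: zero_less_mult_iff)
    with kA have "k\<^sup>2 * (k\<^sup>2 * A) > 0"
      by (simp only: mult_pos_pos)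
    moreover have "k\<^sup>2 * (k\<^sup>2 * A) = k^4 * A"
      by algebra
    ultimately show ?thesis
      unfolding D_def using B by (simp add: add_pos_nonneg)
  next
    assume mB: "m * B > 0"
    then have "m > 0"
      using B by (simp add: zero_less_mult_iff)
    with mB have "m * (m * B) > 0"
      by (simp only: mult_pos_pos)
    then show ?thesis
      unfolding D_def using A by (simp add: add_nonneg_pos power2_eq_square mult.assoc)
  qed
  have lhs: "2 * (G1 / (G1 + G2)) - 1 = 2 * k\<^sup>2 * m * C / D"
    using D_pos unfolding G1 G2 D_def by (simp add: field_simps)
  have "k\<^sup>2 + (1 - P) * kR\<^sup>2 = k\<^sup>2 * m * (A + B) / S"
    using S_pos unfolding P_eq by (simp add: field_simps) (simp add: S_def m_def algebra_simps)
  moreover have "k\<^sup>2 + kR\<^sup>2 * P = D / S"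
    using S_pos unfolding P_eq
    by (simp add: field_simps) (simp add: S_def D_def m_def algebra_simps power2_eq_square power4_eq_xxxx)
  ultimately have rhs: "(k\<^sup>2 + (1 - P) * kR\<^sup>2) / (k\<^sup>2 + kR\<^sup>2 * P) = k\<^sup>2 * m * (A + B) / D"
    using S_pos by simp
  have "\<bar>2 * k\<^sup>2 * m * C\<bar> = k\<^sup>2 * m * \<bar>2 * C\<bar>"
    using \<open>m \<ge> 0\<close> by (simp add: abs_mult)
  also have "\<dots> \<le> k\<^sup>2 * m * (A + B)"
    using C \<open>m \<ge> 0\<close> by (simp add: mult_left_mono)
  finally show ?thesis
    unfolding lhs rhs using D_pos by (simp add: divide_right_mono)
qed

definition shell_integrable :: "'w measure \<Rightarrow> ('w \<Rightarrow> real \<Rightarrow> real) \<Rightarrow> bool" where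
  "shell_integrable M g \<longleftrightarrow>
     integrable (M \<Otimes>\<^sub>M lborel) (\<lambda>x. indicator {0<..<2*pi} (snd x) * g (fst x) (snd x))"

text \<open>The open angle interval is the one over which \<^term>\<open>LBINT \<theta>=0..2*pi. f \<theta>\<close> integrates.\<close>

definition shell_integral :: "'w measure \<Rightarrow> ('w \<Rightarrow> real \<Rightarrow> real) \<Rightarrow> real" where
  "shell_integral M g =
     (\<integral>x. indicator {0<..<2*pi} (snd x) * g (fst x) (snd x) \<partial>(M \<Otimes>\<^sub>M lborel))"

lemma bracket_eq_shell_integral:
  assumes "sigma_finite_measure M" and "shell_integrable M g"
    and "\<And>\<omega> \<theta>. Re (a \<omega> (wv k \<theta>) * cnj (b \<omega> (wv k \<theta>)) + cnj (a \<omega> (wv k \<theta>)) * b \<omega> (wv k \<theta>)) = g \<omega> \<theta>"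
  shows "bracket M a b k = k / 2 * shell_integral M g"
proof -
  interpret pair_sigma_finite M lborel
    using assms(1) by (simp add: pair_sigma_finite_def lborel.sigma_finite_measure_axioms)
  have "bracket M a b k = 1/2 * (\<integral>\<theta>. k * (\<integral>\<omega>. indicator {0<..<2*pi} \<theta> * g \<omega> \<theta> \<partial>M) \<partial>lborel)"
    unfolding bracket_def interval_lebesgue_integral_def set_lebesgue_integral_def assms(3)
    by (simp add: zero_ereal_def mult.left_commute)
  also have "\<dots> = k / 2 * shell_integral M g"
    using integral_snd[of "\<lambda>\<omega> \<theta>. indicator {0<..<2*pi} \<theta> * g \<omega> \<theta>"] assms(2)
    by (simp add: shell_integral_def shell_integrable_def case_prod_beta')
  finally show ?thesis .
qed

lemma shell_integrable_dominated:
  assumes "integrable (M \<Otimes>\<^sub>M lborel) (\<lambda>x. indicator {0..2*pi} (snd x) * h (fst x) (snd x))"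
    and "(\<lambda>x. g (fst x) (snd x)) \<in> borel_measurable (M \<Otimes>\<^sub>M lborel)"
    and "\<And>\<omega> \<theta>. \<bar>g \<omega> \<theta>\<bar> \<le> h \<omega> \<theta>"
  shows "shell_integrable M g"
  unfolding shell_integrable_def
proof (rule Bochner_Integration.integrable_bound[OF assms(1)])
  show "(\<lambda>x. indicator {0<..<2*pi} (snd x) * g (fst x) (snd x)) \<in> borel_measurable (M \<Otimes>\<^sub>M lborel)"
    using assms(2) by measurable
  have "\<bar>indicator {0<..<2*pi} \<theta> * g \<omega> \<theta>\<bar> \<le> \<bar>indicator {0..2*pi} \<theta> * h \<omega> \<theta>\<bar>" for \<omega> \<theta>
    using assms(3)[of \<omega> \<theta>] by (auto simp: indicator_def)
  then show "AE x in M \<Otimes>\<^sub>M lborel. norm (indicator {0<..<2*pi} (snd x) * g (fst x) (snd x))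
      \<le> norm (indicator {0..2*pi} (snd x) * h (fst x) (snd x))"
    by simp
qed

locale two_layer_shell = sigma_finite_measure M
  for M :: "'w measure" and psi1 psi2 :: "'w field" and k :: real +
  assumes measurable_psi1 [measurable]:
      "(\<lambda>x. psi1 (fst x) (wv k (snd x))) \<in> borel_measurable (M \<Otimes>\<^sub>M lborel)"
    and measurable_psi2 [measurable]:
      "(\<lambda>x. psi2 (fst x) (wv k (snd x))) \<in> borel_measurable (M \<Otimes>\<^sub>M lborel)"
    and integrable_psi1: "integrable (M \<Otimes>\<^sub>M lborel)
      (\<lambda>x. indicator {0..2*pi} (snd x) * (cmod (psi1 (fst x) (wv k (snd x))))\<^sup>2)"
    and integrable_psi2: "integrable (M \<Otimes>\<^sub>M lborel)
      (\<lambda>x. indicator {0..2*pi} (snd x) * (cmod (psi2 (fst x) (wv k (snd x))))\<^sup>2)"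
begin

lemma shell_integrable_psi1: "shell_integrable M (\<lambda>\<omega> \<theta>. (cmod (psi1 \<omega> (wv k \<theta>)))\<^sup>2)"
  by (rule shell_integrable_dominated[OF integrable_psi1]) auto

lemma shell_integrable_psi2: "shell_integrable M (\<lambda>\<omega> \<theta>. (cmod (psi2 \<omega> (wv k \<theta>)))\<^sup>2)"
  by (rule shell_integrable_dominated[OF integrable_psi2]) auto

lemma shell_integrable_cross:
  "shell_integrable M (\<lambda>\<omega> \<theta>. Re (psi1 \<omega> (wv k \<theta>) * cnj (psi2 \<omega> (wv k \<theta>))))"
proof (rule shell_integrable_dominated[where h = "\<lambda>\<omega> \<theta>. (cmod (psi1 \<omega> (wv k \<theta>)))\<^sup>2 + (cmod (psi2 \<omega> (wv k \<theta>)))\<^sup>2"])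
  show "integrable (M \<Otimes>\<^sub>M lborel) (\<lambda>x. indicator {0..2*pi} (snd x)
      * ((cmod (psi1 (fst x) (wv k (snd x))))\<^sup>2 + (cmod (psi2 (fst x) (wv k (snd x))))\<^sup>2))"
    using Bochner_Integration.integrable_add[OF integrable_psi1 integrable_psi2] by (simp add: distrib_left)
  fix u v :: complex
  have "\<bar>Re (u * cnj v)\<bar> \<le> cmod u * cmod v"
    using abs_Re_le_cmod[of "u * cnj v"] by (simp add: norm_mult)
  also have "\<dots> \<le> (cmod u)\<^sup>2 + (cmod v)\<^sup>2"
    using sum_squares_bound[of "cmod u" "cmod v"] mult_nonneg_nonneg[OF norm_ge_zero norm_ge_zero, of u v]
    unfolding power2_eq_square by linarith
  finally show "\<bar>Re (u * cnj v)\<bar> \<le> (cmod u)\<^sup>2 + (cmod v)\<^sup>2" .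
qed measurable

lemma bracket_real_combination:
  assumes a: "\<And>\<omega> \<theta>. a \<omega> (wv k \<theta>) = of_real a1 * psi1 \<omega> (wv k \<theta>) + of_real a2 * psi2 \<omega> (wv k \<theta>)"
    and b: "\<And>\<omega> \<theta>. b \<omega> (wv k \<theta>) = of_real b1 * psi1 \<omega> (wv k \<theta>) + of_real b2 * psi2 \<omega> (wv k \<theta>)"
  shows "bracket M a b k = k * (a1 * b1 * shell_integral M (\<lambda>\<omega> \<theta>. (cmod (psi1 \<omega> (wv k \<theta>)))\<^sup>2)
      + a2 * b2 * shell_integral M (\<lambda>\<omega> \<theta>. (cmod (psi2 \<omega> (wv k \<theta>)))\<^sup>2)
      + (a1 * b2 + a2 * b1) * shell_integral M (\<lambda>\<omega> \<theta>. Re (psi1 \<omega> (wv k \<theta>) * cnj (psi2 \<omega> (wv k \<theta>)))))"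
proof -
  let ?I = "\<lambda>x. indicator {0<..<2*pi} (snd x) :: real"
  let ?X = "\<lambda>x. ?I x * (cmod (psi1 (fst x) (wv k (snd x))))\<^sup>2"
  let ?Y = "\<lambda>x. ?I x * (cmod (psi2 (fst x) (wv k (snd x))))\<^sup>2"
  let ?Z = "\<lambda>x. ?I x * Re (psi1 (fst x) (wv k (snd x)) * cnj (psi2 (fst x) (wv k (snd x))))"
  define g where "g \<omega> \<theta> = 2 * (a1 * b1 * (cmod (psi1 \<omega> (wv k \<theta>)))\<^sup>2 + a2 * b2 * (cmod (psi2 \<omega> (wv k \<theta>)))\<^sup>2
      + (a1 * b2 + a2 * b1) * Re (psi1 \<omega> (wv k \<theta>) * cnj (psi2 \<omega> (wv k \<theta>))))" for \<omega> \<theta>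
  have expand: "(\<lambda>x. ?I x * g (fst x) (snd x))
      = (\<lambda>x. (2 * a1 * b1) * ?X x + (2 * a2 * b2) * ?Y x + (2 * (a1 * b2 + a2 * b1)) * ?Z x)"
    by (simp add: g_def fun_eq_iff algebra_simps)
  have "integrable (M \<Otimes>\<^sub>M lborel) ?X" "integrable (M \<Otimes>\<^sub>M lborel) ?Y" "integrable (M \<Otimes>\<^sub>M lborel) ?Z"
    using shell_integrable_psi1 shell_integrable_psi2 shell_integrable_cross
    by (simp_all add: shell_integrable_def)
  then have integrable_g: "shell_integrable M g"
    and integral_g: "shell_integral M g = (2 * a1 * b1) * integral\<^sup>L (M \<Otimes>\<^sub>M lborel) ?X
      + (2 * a2 * b2) * integral\<^sup>L (M \<Otimes>\<^sub>M lborel) ?Y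
      + (2 * (a1 * b2 + a2 * b1)) * integral\<^sup>L (M \<Otimes>\<^sub>M lborel) ?Z"
    unfolding shell_integrable_def shell_integral_def expand by simp_all
  have "Re (a \<omega> (wv k \<theta>) * cnj (b \<omega> (wv k \<theta>)) + cnj (a \<omega> (wv k \<theta>)) * b \<omega> (wv k \<theta>)) = g \<omega> \<theta>"
    for \<omega> \<theta>
    unfolding a b g_def by (rule Re_symmetrised_product_real_combinations)
  then have "bracket M a b k = k / 2 * shell_integral M g"
    by (rule bracket_eq_shell_integral[OF sigma_finite_measure_axioms integrable_g])
  then show ?thesis
    unfolding integral_g by (simp add: shell_integral_def algebra_simps)
qed

abbreviation barotropic_mode :: "'w field" where
  "barotropic_mode \<equiv> barotropic psi1 psi2"

abbreviation baroclinic_mode :: "'w field" where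
  "baroclinic_mode \<equiv> tau psi1 psi2"

lemma bracket_mode_combination:
  assumes a: "\<And>\<omega> \<theta>. a \<omega> (wv k \<theta>) = of_real a1 * barotropic_mode \<omega> (wv k \<theta>) + of_real a2 * baroclinic_mode \<omega> (wv k \<theta>)"
    and b: "\<And>\<omega> \<theta>. b \<omega> (wv k \<theta>) = of_real b1 * barotropic_mode \<omega> (wv k \<theta>) + of_real b2 * baroclinic_mode \<omega> (wv k \<theta>)"
  shows "bracket M a b k = a1 * b1 * bracket M barotropic_mode barotropic_mode k
      + a2 * b2 * bracket M baroclinic_mode baroclinic_mode k
      + (a1 * b2 + a2 * b1) * bracket M barotropic_mode baroclinic_mode k"
proof -
  have a': "a \<omega> (wv k \<theta>) = of_real ((a1 + a2) / 2) * psi1 \<omega> (wv k \<theta>) + of_real ((a1 - a2) / 2) * psi2 \<omega> (wv k \<theta>)"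
    and b': "b \<omega> (wv k \<theta>) = of_real ((b1 + b2) / 2) * psi1 \<omega> (wv k \<theta>) + of_real ((b1 - b2) / 2) * psi2 \<omega> (wv k \<theta>)"
    for \<omega> \<theta>
    unfolding a b by (simp_all add: barotropic_def tau_def field_simps)
  have bt: "barotropic_mode \<omega> (wv k \<theta>) = of_real (1 / 2) * psi1 \<omega> (wv k \<theta>) + of_real (1 / 2) * psi2 \<omega> (wv k \<theta>)"
    and bc: "baroclinic_mode \<omega> (wv k \<theta>) = of_real (1 / 2) * psi1 \<omega> (wv k \<theta>) + of_real (- 1 / 2) * psi2 \<omega> (wv k \<theta>)"
    for \<omega> \<theta>
    by (simp_all add: barotropic_def tau_def field_simps)
  show ?thesis
    unfolding bracket_real_combination[OF a' b'] bracket_real_combination[OF bt bt]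
      bracket_real_combination[OF bc bc] bracket_real_combination[OF bt bc]
    by (simp add: field_simps)
qed

lemma bracket_modes_cross_bound:
  assumes "k \<ge> 0"
  shows "\<bar>2 * bracket M barotropic_mode baroclinic_mode k\<bar>
    \<le> bracket M barotropic_mode barotropic_mode k + bracket M baroclinic_mode baroclinic_mode k"
proof -
  have "bracket M psi1 psi1 k \<ge> 0" "bracket M psi2 psi2 k \<ge> 0"
    using assms by (simp_all add: bracket_self_nonneg)
  then show ?thesis
    unfolding bracket_mode_combination[OF psi1_modes psi1_modes] bracket_mode_combination[OF psi2_modes psi2_modes]
    by simp
qed

lemma Espec_modes:
  "Espec M kR psi1 psi2 k = 2 * k\<^sup>2 * bracket M barotropic_mode barotropic_mode k
     + 2 * (k\<^sup>2 + kR\<^sup>2) * bracket M baroclinic_mode baroclinic_mode k"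
  unfolding Espec_def bracket_mode_combination[OF psi1_modes q1_wv_modes]
    bracket_mode_combination[OF psi2_modes q2_wv_modes]
  by (simp add: algebra_simps)

lemma G1spec_modes:
  "G1spec M kR psi1 psi2 k = k^4 * bracket M barotropic_mode barotropic_mode k
     + 2 * k\<^sup>2 * (k\<^sup>2 + kR\<^sup>2) * bracket M barotropic_mode baroclinic_mode k
     + (k\<^sup>2 + kR\<^sup>2)\<^sup>2 * bracket M baroclinic_mode baroclinic_mode k"
  unfolding G1spec_def bracket_mode_combination[OF q1_wv_modes q1_wv_modes]
  by (simp add: algebra_simps power2_eq_square power4_eq_xxxx)

lemma G2spec_modes:
  "G2spec M kR psi1 psi2 k = k^4 * bracket M barotropic_mode barotropic_mode k
     - 2 * k\<^sup>2 * (k\<^sup>2 + kR\<^sup>2) * bracket M barotropic_mode baroclinic_mode k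
     + (k\<^sup>2 + kR\<^sup>2)\<^sup>2 * bracket M baroclinic_mode baroclinic_mode k"
  unfolding G2spec_def bracket_mode_combination[OF q2_wv_modes q2_wv_modes]
  by (simp add: algebra_simps power2_eq_square power4_eq_xxxx)

end

theorem proposition1:
  fixes M :: "'w measure" and psi1 psi2 :: "'w field" and kR k :: real
  assumes "prob_space M"
    and "kR > 0"
    and real1: "\<And>\<omega> \<kappa>. psi1 \<omega> (- \<kappa>) = cnj (psi1 \<omega> \<kappa>)"
    and real2: "\<And>\<omega> \<kappa>. psi2 \<omega> (- \<kappa>) = cnj (psi2 \<omega> \<kappa>)"
    and "k > 0"
    and meas1: "(\<lambda>x. psi1 (fst x) (wv k (snd x))) \<in> borel_measurable (M \<Otimes>\<^sub>M lborel)"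
    and meas2: "(\<lambda>x. psi2 (fst x) (wv k (snd x))) \<in> borel_measurable (M \<Otimes>\<^sub>M lborel)"
    and sq1: "integrable (M \<Otimes>\<^sub>M lborel)
                (\<lambda>x. indicator {0..2*pi} (snd x) * (cmod (psi1 (fst x) (wv k (snd x))))\<^sup>2)"
    and sq2: "integrable (M \<Otimes>\<^sub>M lborel)
                (\<lambda>x. indicator {0..2*pi} (snd x) * (cmod (psi2 (fst x) (wv k (snd x))))\<^sup>2)"
    and "Espec M kR psi1 psi2 k > 0"
  shows "\<bar>2 * Gammaratio M kR psi1 psi2 k - 1\<bar>
           \<le> (k\<^sup>2 + (1 - Pratio M kR psi1 psi2 k) * kR\<^sup>2) / (k\<^sup>2 + kR\<^sup>2 * Pratio M kR psi1 psi2 k)"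
proof -
  interpret two_layer_shell M psi1 psi2 k
    using prob_space_imp_sigma_finite[OF \<open>prob_space M\<close>] meas1 meas2 sq1 sq2
    by (simp add: two_layer_shell_def two_layer_shell_axioms_def)
  show ?thesis
    unfolding Gammaratio_def Gspec_def Pratio_def EPspec_def
  proof (rule enstrophy_asymmetry_bound[OF _ _ _ Espec_modes \<open>Espec M kR psi1 psi2 k > 0\<close> _ G1spec_modes G2spec_modes])
    show "bracket M barotropic_mode barotropic_mode k \<ge> 0" "bracket M baroclinic_mode baroclinic_mode k \<ge> 0"
      using \<open>k > 0\<close> by (simp_all add: bracket_self_nonneg)
    show "\<bar>2 * bracket M barotropic_mode baroclinic_mode k\<bar>
        \<le> bracket M barotropic_mode barotropic_mode k + bracket M baroclinic_mode baroclinic_mode k"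
      using \<open>k > 0\<close> by (simp add: bracket_modes_cross_bound)
  qed simp
qed

end
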